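(* For $0\le\alpha,\beta\le d$, with $s_0=z$ and $s_\alpha=(1+w_\alpha v_\alpha)\cdots(1+w_1v_1)z$ for $\alpha\geq1$, $$\{\!\{s_\alpha,s_\beta\}\!\}=\tfrac12(e_0\otimes s_\alpha s_\beta-s_\beta s_\alpha\otimes e_0)+\tfrac12o(\alpha,\beta)(s_\beta\otimes s_\alpha-s_\alpha\otimes s_\beta).$$
   Context: Fix $d\ge1$; $o(\alpha,\beta)=0,1,-1$ according as $\alpha=\beta,\alpha<\beta,\alpha>\beta$. Let $\mathbb C\bar Q$ be the path algebra generated by orthogonal idempotents $e_0,e_\infty$ with $e_0+e_\infty=1$ and arrows $x,y$ (loops at vertex $0$: $x=e_0xe_0$, $y=e_0ye_0$), $v_\alpha=e_\infty v_\alpha e_0$, $w_\alpha=e_0w_\alpha e_\infty$ ($\alpha=1,\dots,d$); paths are written left to right. Let $\mathcal A^\times$ be obtained by formally inverting $1+xy,1+yx,1+w_\alpha v_\alpha,1+v_\alpha w_\alpha$ and adjoining $x^{-1}=e_0x^{-1}e_0$ with $xx^{-1}=x^{-1}x=e_0$; put $z=y+x^{-1}$ (invertible in $e_0\mathcal A^\times e_0$). A double bracket is a bilinear map $\{\!\{-,-\}\!\}:\mathcal A^\times\times\mathcal A^\times\to\mathcal A^\times\otimes\mathcal A^\times$ with $\{\!\{a,b\}\!\}=-\{\!\{b,a\}\!\}^\circ$ ($(u\otimes v)^\circ=v\otimes u$) and $\{\!\{a,bc\}\!\}=b\{\!\{a,c\}\!\}+\{\!\{a,b\}\!\}c$ for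 the outer bimodule structure $b(u\otimes v)c=bu\otimes vc$. The double bracket used is the unique one vanishing on $e_0,e_\infty$ with $\{\!\{x,x\}\!\}=\tfrac12(x^2\otimes e_0-e_0\otimes x^2)$, $\{\!\{y,y\}\!\}=\tfrac12(e_0\otimes y^2-y^2\otimes e_0)$, $\{\!\{x,y\}\!\}=e_0\otimes e_0+\tfrac12(yx\otimes e_0+e_0\otimes xy+y\otimes x-x\otimes y)$, $\{\!\{u,w_\alpha\}\!\}=\tfrac12(e_0\otimes uw_\alpha-u\otimes w_\alpha)$, $\{\!\{u,v_\alpha\}\!\}=\tfrac12(v_\alpha u\otimes e_0-v_\alpha\otimes u)$ for $u\in\{x,y\}$, $\{\!\{v_\alpha,v_\beta\}\!\}=\tfrac12o(\beta,\alpha)(v_\alpha\otimes v_\beta+v_\beta\otimes v_\alpha)$, $\{\!\{w_\alpha,w_\beta\}\!\}=\tfrac12o(\beta,\alpha)(w_\alpha\otimes w_\beta+w_\beta\otimes w_\alpha)$, $\{\!\{v_\alpha,w_\beta\}\!\}=\delta_{\alpha\beta}(e_0\otimes e_\infty+\tfrac12w_\alpha v_\alpha\otimes e_\infty+\tfrac12e_0\otimes v_\alpha w_\alpha)+\tfrac12o(\alpha,\beta)(e_0\otimes v_\alpha w_\beta+w_\beta v_\alpha\otimes e_\infty)$, extended uniquely to $\mathcal A^\times$ (it also satisfies $\{\!\{bc,a\}\!\}=\{\!\{b,a\}\!\}'c\otimes\{\!\{b,a\}\!\}''+\{\!\{c,a\}\!\}'\otimes b\{\!\{c,a\}\!\}''$).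 *)

theory Defs
  imports Main "HOL.Real_Vector_Spaces"
begin

definition osgn :: "nat \<Rightarrow> nat \<Rightarrow> real" where
  "osgn a b = (if a = b then 0 else if a < b then 1 else -1)"

fun s_elem :: "(nat \<Rightarrow> 'a::ring_1) \<Rightarrow> (nat \<Rightarrow> 'a) \<Rightarrow> 'a \<Rightarrow> nat \<Rightarrow> 'a" where
  "s_elem w v z 0 = z"
| "s_elem w v z (Suc n) = (1 + w (Suc n) * v (Suc n)) * s_elem w v z n"

text \<open>An abstract model of the tensor square A (x) A of an algebra A:
  a real vector space T with a bilinear map tens (u (x) v), the outer bimodule
  structure b (u (x) v) c = bu (x) vc, and the flip (u (x) v)^o = v (x) u.\<close>
definition tensor_square ::
  "('a::real_algebra_1 \<Rightarrow> 'a \<Rightarrow> 't::real_vector) \<Rightarrow> ('a \<Rightarrow> 't \<Rightarrow> 't) \<Rightarrow> ('t \<Rightarrow> 'a \<Rightarrow> 't)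
   \<Rightarrow> ('t \<Rightarrow> 't) \<Rightarrow> bool" where
  "tensor_square tens lm rm sw \<longleftrightarrow>
     (\<forall>u u' v. tens (u + u') v = tens u v + tens u' v) \<and>
     (\<forall>u v v'. tens u (v + v') = tens u v + tens u v') \<and>
     (\<forall>r u v. tens (r *\<^sub>R u) v = r *\<^sub>R tens u v) \<and>
     (\<forall>r u v. tens u (r *\<^sub>R v) = r *\<^sub>R tens u v) \<and>
     (\<forall>b X Y. lm b (X + Y) = lm b X + lm b Y) \<and>
     (\<forall>b b' X. lm (b + b') X = lm b X + lm b' X) \<and>
     (\<forall>r b X. lm b (r *\<^sub>R X) = r *\<^sub>R lm b X) \<and>
     (\<forall>r b X. lm (r *\<^sub>R b) X = r *\<^sub>R lm b X) \<and>
     (\<forall>b b' X. lm (b * b') X = lm b (lm b' X)) \<and>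
     (\<forall>X. lm 1 X = X) \<and>
     (\<forall>c X Y. rm (X + Y) c = rm X c + rm Y c) \<and>
     (\<forall>c c' X. rm X (c + c') = rm X c + rm X c') \<and>
     (\<forall>r c X. rm (r *\<^sub>R X) c = r *\<^sub>R rm X c) \<and>
     (\<forall>r c X. rm X (r *\<^sub>R c) = r *\<^sub>R rm X c) \<and>
     (\<forall>c c' X. rm X (c * c') = rm (rm X c) c') \<and>
     (\<forall>X. rm X 1 = X) \<and>
     (\<forall>b c X. rm (lm b X) c = lm b (rm X c)) \<and>
     (\<forall>b u v. lm b (tens u v) = tens (b * u) v) \<and>
     (\<forall>c u v. rm (tens u v) c = tens u (v * c)) \<and>
     (\<forall>X Y. sw (X + Y) = sw X + sw Y) \<and>
     (\<forall>r X. sw (r *\<^sub>R X) = r *\<^sub>R sw X) \<and>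
     (\<forall>X. sw (sw X) = X) \<and>
     (\<forall>u v. sw (tens u v) = tens v u)"

text \<open>Relations of the localised path algebra A^x: idempotents e0, einf, loops x, y at 0,
  arrows v_a : 0 -> inf, w_a : inf -> 0, the inverse xi of x in e0 A e0, and invertibility
  of 1+xy, 1+yx, 1+w_a v_a, 1+v_a w_a.\<close>
definition path_algebra_data ::
  "nat \<Rightarrow> 'a::ring_1 \<Rightarrow> 'a \<Rightarrow> 'a \<Rightarrow> 'a \<Rightarrow> 'a \<Rightarrow> (nat \<Rightarrow> 'a) \<Rightarrow> (nat \<Rightarrow> 'a) \<Rightarrow> bool" where
  "path_algebra_data d e0 einf x y xi v w \<longleftrightarrow>
     e0 + einf = 1 \<and> e0 * e0 = e0 \<and> einf * einf = einf \<and> e0 * einf = 0 \<and> einf * e0 = 0 \<and>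
     x = e0 * x * e0 \<and> y = e0 * y * e0 \<and>
     (\<forall>a\<in>{1..d}. v a = einf * v a * e0 \<and> w a = e0 * w a * einf) \<and>
     xi = e0 * xi * e0 \<and> x * xi = e0 \<and> xi * x = e0 \<and>
     (\<exists>i. (1 + x * y) * i = 1 \<and> i * (1 + x * y) = 1) \<and>
     (\<exists>i. (1 + y * x) * i = 1 \<and> i * (1 + y * x) = 1) \<and>
     (\<forall>a\<in>{1..d}. \<exists>i. (1 + w a * v a) * i = 1 \<and> i * (1 + w a * v a) = 1) \<and>
     (\<forall>a\<in>{1..d}. \<exists>i. (1 + v a * w a) * i = 1 \<and> i * (1 + v a * w a) = 1)"

definition double_bracket ::
  "nat \<Rightarrow> 'a::real_algebra_1 \<Rightarrow> 'a \<Rightarrow> 'a \<Rightarrow> 'a \<Rightarrow> (nat \<Rightarrow> 'a) \<Rightarrow> (nat \<Rightarrow> 'a)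
   \<Rightarrow> ('a \<Rightarrow> 'a \<Rightarrow> 't::real_vector) \<Rightarrow> ('a \<Rightarrow> 't \<Rightarrow> 't) \<Rightarrow> ('t \<Rightarrow> 'a \<Rightarrow> 't) \<Rightarrow> ('t \<Rightarrow> 't)
   \<Rightarrow> ('a \<Rightarrow> 'a \<Rightarrow> 't) \<Rightarrow> bool" where
  "double_bracket d e0 einf x y v w tens lm rm sw br \<longleftrightarrow>
     (\<forall>a a' b. br (a + a') b = br a b + br a' b) \<and>
     (\<forall>a b b'. br a (b + b') = br a b + br a b') \<and>
     (\<forall>r a b. br (r *\<^sub>R a) b = r *\<^sub>R br a b) \<and>
     (\<forall>r a b. br a (r *\<^sub>R b) = r *\<^sub>R br a b) \<and>
     (\<forall>a b. br a b = - sw (br b a)) \<and>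
     (\<forall>a b c. br a (b * c) = lm b (br a c) + rm (br a b) c) \<and>
     (\<forall>a. br a e0 = 0 \<and> br a einf = 0 \<and> br e0 a = 0 \<and> br einf a = 0) \<and>
     br x x = (1/2) *\<^sub>R (tens (x * x) e0 - tens e0 (x * x)) \<and>
     br y y = (1/2) *\<^sub>R (tens e0 (y * y) - tens (y * y) e0) \<and>
     br x y = tens e0 e0 + (1/2) *\<^sub>R (tens (y * x) e0 + tens e0 (x * y) + tens y x - tens x y) \<and>
     (\<forall>u\<in>{x, y}. \<forall>a\<in>{1..d}.
        br u (w a) = (1/2) *\<^sub>R (tens e0 (u * w a) - tens u (w a)) \<and>
        br u (v a) = (1/2) *\<^sub>R (tens (v a * u) e0 - tens (v a) u)) \<and>
     (\<forall>a\<in>{1..d}. \<forall>b\<in>{1..d}.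
        br (v a) (v b) = ((1/2) * osgn b a) *\<^sub>R (tens (v a) (v b) + tens (v b) (v a)) \<and>
        br (w a) (w b) = ((1/2) * osgn b a) *\<^sub>R (tens (w a) (w b) + tens (w b) (w a)) \<and>
        br (v a) (w b) =
          (if a = b then tens e0 einf + (1/2) *\<^sub>R tens (w a * v a) einf
                         + (1/2) *\<^sub>R tens e0 (v a * w a) else 0)
          + ((1/2) * osgn a b) *\<^sub>R (tens e0 (v a * w b) + tens (w b * v a) einf))"

end

theory Submission
  imports Defs
begin

text \<open>All elements involved lie in the corner \<open>e\<^sub>0 A e\<^sub>0\<close>, and every bracket between two of them,
  \<open>a\<close> and \<open>b\<close>, has the normal form \<open>p e\<^sub>0 \<otimes> ab + q ba \<otimes> e\<^sub>0 + r a \<otimes> b + s b \<otimes> a\<close>.  The derivation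
  rules propagate normal forms through products of corner elements with explicit coefficient
  updates.  The building blocks \<open>z = y + x\<^sup>-\<^sup>1\<close> and \<open>t\<^sub>\<alpha> = e\<^sub>0 + w\<^sub>\<alpha> v\<^sub>\<alpha>\<close> have self-brackets with
  coefficients \<open>(1/2, -1/2, 0, 0)\<close>, while \<open>{{t\<^sub>\<alpha>, z}}\<close> and \<open>{{t\<^sub>\<alpha>, t\<^sub>\<beta>}}\<close> for \<open>\<beta> < \<alpha>\<close> have
  coefficients \<open>(-1/2, -1/2, 1/2, 1/2)\<close>.  Since \<open>s\<^sub>\<alpha> = t\<^sub>\<alpha> s\<^sub>\<alpha>\<^sub>-\<^sub>1\<close>, induction on \<open>\<alpha>\<close> yields in turn
  \<open>{{t\<^sub>\<gamma>, s\<^sub>\<alpha>}}\<close> for \<open>\<alpha> < \<gamma>\<close>, then \<open>{{s\<^sub>\<alpha>, s\<^sub>\<alpha>}}\<close>, then \<open>{{s\<^sub>\<alpha>, s\<^sub>\<beta>}}\<close> for \<open>\<beta> < \<alpha>\<close>; the case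
  \<open>\<alpha> < \<beta>\<close> follows by antisymmetry.\<close>

definition bracket_form ::
  "('a::real_algebra_1 \<Rightarrow> 'a \<Rightarrow> 't::real_vector) \<Rightarrow> 'a \<Rightarrow> real \<Rightarrow> real \<Rightarrow> real \<Rightarrow> real \<Rightarrow> 'a \<Rightarrow> 'a \<Rightarrow> 't"
  where "bracket_form tens e p q r s a b =
    p *\<^sub>R tens e (a * b) + q *\<^sub>R tens (b * a) e + r *\<^sub>R tens a b + s *\<^sub>R tens b a"

lemma corner_absorb:
  fixes c :: "'a::semigroup_mult"
  assumes "c = e * c * f" and "e * e = e" and "f * f = f"
  shows "e * c = c" and "c * f = c"
  by (metis assms mult.assoc)+

lemma corner_annihilate:
  fixes c :: "'a::{semigroup_mult, mult_zero}"
  assumes "c = e * c * f"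
  shows "f * g = 0 \<Longrightarrow> c * g = 0" and "g * e = 0 \<Longrightarrow> g * c = 0"
  by (metis assms mult.assoc mult_zero_left mult_zero_right)+

locale tensor_square_structure =
  fixes tens :: "'a::real_algebra_1 \<Rightarrow> 'a \<Rightarrow> 't::real_vector"
    and lm :: "'a \<Rightarrow> 't \<Rightarrow> 't" and rm :: "'t \<Rightarrow> 'a \<Rightarrow> 't" and sw :: "'t \<Rightarrow> 't"
  assumes tensor_square: "tensor_square tens lm rm sw"
begin

lemma tens_add_left [simp]: "tens (u + u') v = tens u v + tens u' v"
  and tens_add_right [simp]: "tens u (v + v') = tens u v + tens u v'"
  and tens_scaleR_left [simp]: "tens (r *\<^sub>R u) v = r *\<^sub>R tens u v"
  and tens_scaleR_right [simp]: "tens u (r *\<^sub>R v) = r *\<^sub>R tens u v"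
  and lm_add [simp]: "lm b (X + Y) = lm b X + lm b Y"
  and lm_scaleR [simp]: "lm b (r *\<^sub>R X) = r *\<^sub>R lm b X"
  and lm_mult: "lm (b * b') X = lm b (lm b' X)"
  and lm_tens [simp]: "lm b (tens u v) = tens (b * u) v"
  and rm_add [simp]: "rm (X + Y) c = rm X c + rm Y c"
  and rm_scaleR [simp]: "rm (r *\<^sub>R X) c = r *\<^sub>R rm X c"
  and rm_tens [simp]: "rm (tens u v) c = tens u (v * c)"
  and sw_add [simp]: "sw (X + Y) = sw X + sw Y"
  and sw_scaleR [simp]: "sw (r *\<^sub>R X) = r *\<^sub>R sw X"
  and sw_tens [simp]: "sw (tens u v) = tens v u"
  using tensor_square by (simp_all add: tensor_square_def)

lemma tens_minus_left [simp]: "tens (- u) v = - tens u v"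
  using tens_scaleR_left[of "-1" u v] by simp

lemma tens_minus_right [simp]: "tens u (- v) = - tens u v"
  using tens_scaleR_right[of u "-1" v] by simp

lemma tens_diff_left [simp]: "tens (u - u') v = tens u v - tens u' v"
  using tens_add_left[of u "- u'" v] by simp

lemma tens_diff_right [simp]: "tens u (v - v') = tens u v - tens u v'"
  using tens_add_right[of u v "- v'"] by simp

lemma tens_zero_left [simp]: "tens 0 v = 0"
  using tens_scaleR_left[of 0 0 v] by simp

lemma tens_zero_right [simp]: "tens u 0 = 0"
  using tens_scaleR_right[of u 0 0] by simp

lemma lm_minus [simp]: "lm b (- X) = - lm b X"
  using lm_scaleR[of b "-1" X] by simp

lemma lm_diff [simp]: "lm b (X - Y) = lm b X - lm b Y"
  using lm_add[of b X "- Y"] by simp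

lemma lm_zero [simp]: "lm b 0 = 0"
  using lm_scaleR[of b 0 0] by simp

lemma rm_minus [simp]: "rm (- X) c = - rm X c"
  using rm_scaleR[of "-1" X c] by simp

lemma rm_diff [simp]: "rm (X - Y) c = rm X c - rm Y c"
  using rm_add[of X "- Y" c] by simp

lemma rm_zero [simp]: "rm 0 c = 0"
  using rm_scaleR[of 0 0 c] by simp

lemma sw_zero [simp]: "sw 0 = 0"
  using sw_scaleR[of 0 0] by simp

lemma sw_minus [simp]: "sw (- X) = - sw X"
  using sw_scaleR[of "-1" X] by simp

lemma sw_diff [simp]: "sw (X - Y) = sw X - sw Y"
  using sw_add[of X "- Y"] by simp

lemma bracket_form_add_right:
  "bracket_form tens e p q r s a (b + b') = bracket_form tens e p q r s a b + bracket_form tens e p q r s a b'"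
  by (simp add: bracket_form_def algebra_simps)

end

locale outer_double_bracket = tensor_square_structure tens lm rm sw
  for tens :: "'a::real_algebra_1 \<Rightarrow> 'a \<Rightarrow> 't::real_vector" and lm rm sw +
  fixes br :: "'a \<Rightarrow> 'a \<Rightarrow> 't"
  assumes br_add_left [simp]: "br (a + a') b = br a b + br a' b"
    and br_add_right [simp]: "br a (b + b') = br a b + br a b'"
    and br_antisym: "br a b = - sw (br b a)"
    and br_mult_right: "br a (b * c) = lm b (br a c) + rm (br a b) c"
begin

lemma br_mult_left: "br (a * b) c = sw (lm a (sw (br b c))) + sw (rm (sw (br a c)) b)"
proof -
  have "br (a * b) c = - sw (lm a (br c b) + rm (br c a) b)"
    by (simp add: br_antisym[of "a * b"] br_mult_right)
  also have "\<dots> = sw (lm a (sw (br b c))) + sw (rm (sw (br a c)) b)"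
    by (simp add: br_antisym[of c])
  finally show ?thesis .
qed

lemma bracket_form_swap:
  assumes "br a b = bracket_form tens e p q r s a b"
  shows "br b a = bracket_form tens e (- q) (- p) (- r) (- s) b a"
  by (subst br_antisym) (simp add: assms bracket_form_def algebra_simps)

lemma bracket_form_mult_left_expand:
  assumes "br a c = bracket_form tens e p1 q1 r1 s1 a c"
    and "br b c = bracket_form tens e p2 q2 r2 s2 b c"
  shows "br (a * b) c = p1 *\<^sub>R tens (e * b) (a * c) + q1 *\<^sub>R tens (c * a * b) e
      + r1 *\<^sub>R tens (a * b) c + s1 *\<^sub>R tens (c * b) a + p2 *\<^sub>R tens e (a * b * c)
      + q2 *\<^sub>R tens (c * b) (a * e) + r2 *\<^sub>R tens b (a * c) + s2 *\<^sub>R tens c (a * b)"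
  by (simp add: br_mult_left assms bracket_form_def algebra_simps)

lemma bracket_form_mult_right_expand:
  assumes "br c a = bracket_form tens e p1 q1 r1 s1 c a"
    and "br c b = bracket_form tens e p2 q2 r2 s2 c b"
  shows "br c (a * b) = p2 *\<^sub>R tens (a * e) (c * b) + q2 *\<^sub>R tens (a * b * c) e
      + r2 *\<^sub>R tens (a * c) b + s2 *\<^sub>R tens (a * b) c + p1 *\<^sub>R tens e (c * a * b)
      + q1 *\<^sub>R tens (a * c) (e * b) + r1 *\<^sub>R tens c (a * b) + s1 *\<^sub>R tens a (c * b)"
  by (simp add: br_mult_right assms bracket_form_def algebra_simps)

lemma bracket_form_mult_left:
  assumes "br a c = bracket_form tens e p1 q1 r1 s1 a c"
    and "br b c = bracket_form tens e p2 q2 r2 s2 b c"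
    and "e * b = b" and "a * e = a"
  shows "br (a * b) c = bracket_form tens e p2 q1 r1 s2 (a * b) c
    + (p1 + r2) *\<^sub>R tens b (a * c) + (s1 + q2) *\<^sub>R tens (c * b) a"
  using assms(3,4)
  by (simp add: bracket_form_mult_left_expand[OF assms(1,2)] bracket_form_def algebra_simps)

lemma bracket_form_mult_right:
  assumes "br c a = bracket_form tens e p1 q1 r1 s1 c a"
    and "br c b = bracket_form tens e p2 q2 r2 s2 c b"
    and "e * b = b" and "a * e = a"
  shows "br c (a * b) = bracket_form tens e p1 q2 r1 s2 c (a * b)
    + (p2 + s1) *\<^sub>R tens a (c * b) + (r2 + q1) *\<^sub>R tens (a * c) b"
  using assms(3,4)
  by (simp add: bracket_form_mult_right_expand[OF assms(1,2)] bracket_form_def algebra_simps)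

lemma br_inverse_right:
  assumes "br c e = 0" and "x * x' = e" and "x' * x = e" and "e * x' = x'"
  shows "br c x' = - lm x' (rm (br c x) x')"
proof -
  have "br c x' = lm e (br c x')"
    using br_mult_right[of c e x'] assms(1,4) by simp
  also have "\<dots> = lm x' (lm x (br c x') + rm (br c x) x') - lm x' (rm (br c x) x')"
    by (simp add: assms(3)[symmetric] lm_mult)
  also have "lm x (br c x') + rm (br c x) x' = 0"
    using br_mult_right[of c x x'] assms(1,2) by simp
  finally show ?thesis by simp
qed

lemma bracket_form_inverse_right:
  assumes "br c x = bracket_form tens e p q r s c x" and "br c e = 0"
    and "x * x' = e" and "x' * x = e" and "e * x' = x'" and "x' * e = x'"
    and "e * c = c" and "c * e = c"
  shows "br c x' = bracket_form tens e (- s) (- r) (- q) (- p) c x'"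
proof -
  have "x' * (x * c) = c" and "c * (x * x') = c"
    by (simp_all add: assms(3,4,7,8) mult.assoc[symmetric])
  with assms show ?thesis
    by (simp add: br_inverse_right bracket_form_def algebra_simps)
qed

end

locale framed_jordan_bracket =
  fixes d :: nat
    and e0 einf x y xi :: "'a::real_algebra_1"
    and v w :: "nat \<Rightarrow> 'a"
    and tens :: "'a \<Rightarrow> 'a \<Rightarrow> 't::real_vector"
    and lm :: "'a \<Rightarrow> 't \<Rightarrow> 't" and rm :: "'t \<Rightarrow> 'a \<Rightarrow> 't" and sw :: "'t \<Rightarrow> 't"
    and br :: "'a \<Rightarrow> 'a \<Rightarrow> 't"
  assumes tensor: "tensor_square tens lm rm sw"
    and path: "path_algebra_data d e0 einf x y xi v w"
    and bracket: "double_bracket d e0 einf x y v w tens lm rm sw br"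

sublocale framed_jordan_bracket \<subseteq> outer_double_bracket tens lm rm sw br
proof unfold_locales
  note laws = bracket[unfolded double_bracket_def]
  show "tensor_square tens lm rm sw" by (fact tensor)
  show "br (a + a') b = br a b + br a' b" for a a' b using laws by (elim conjE) blast
  show "br a (b + b') = br a b + br a b'" for a b b' using laws by (elim conjE) blast
  show "br a b = - sw (br b a)" for a b using laws by (elim conjE) blast
  show "br a (b * c) = lm b (br a c) + rm (br a b) c" for a b c using laws by (elim conjE) blast
qed

context framed_jordan_bracket
begin

lemma br_idempotent [simp]: "br a e0 = 0" "br a einf = 0" "br e0 a = 0" "br einf a = 0"
  using bracket unfolding double_bracket_def by blast+

lemma br_x_x: "br x x = (1/2) *\<^sub>R (tens (x * x) e0 - tens e0 (x * x))"
  and br_y_y: "br y y = (1/2) *\<^sub>R (tens e0 (y * y) - tens (y * y) e0)"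
  and br_x_y: "br x y = tens e0 e0 + (1/2) *\<^sub>R (tens (y * x) e0 + tens e0 (x * y) + tens y x - tens x y)"
  using bracket unfolding double_bracket_def by blast+

lemma br_loop_w: "u \<in> {x, y} \<Longrightarrow> a \<in> {1..d} \<Longrightarrow> br u (w a) = (1/2) *\<^sub>R (tens e0 (u * w a) - tens u (w a))"
  and br_loop_v: "u \<in> {x, y} \<Longrightarrow> a \<in> {1..d} \<Longrightarrow> br u (v a) = (1/2) *\<^sub>R (tens (v a * u) e0 - tens (v a) u)"
  using bracket unfolding double_bracket_def by blast+

lemma br_v_v: "a \<in> {1..d} \<Longrightarrow> b \<in> {1..d} \<Longrightarrow>
    br (v a) (v b) = ((1/2) * osgn b a) *\<^sub>R (tens (v a) (v b) + tens (v b) (v a))"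
  and br_w_w: "a \<in> {1..d} \<Longrightarrow> b \<in> {1..d} \<Longrightarrow>
    br (w a) (w b) = ((1/2) * osgn b a) *\<^sub>R (tens (w a) (w b) + tens (w b) (w a))"
  and br_v_w: "a \<in> {1..d} \<Longrightarrow> b \<in> {1..d} \<Longrightarrow> br (v a) (w b) =
    (if a = b then tens e0 einf + (1/2) *\<^sub>R tens (w a * v a) einf + (1/2) *\<^sub>R tens e0 (v a * w a) else 0)
    + ((1/2) * osgn a b) *\<^sub>R (tens e0 (v a * w b) + tens (w b * v a) einf)"
  using bracket unfolding double_bracket_def by blast+

lemma idempotents [simp]: "e0 * e0 = e0" "einf * einf = einf" "e0 * einf = 0" "einf * e0 = 0"
  using path by (simp_all add: path_algebra_data_def)

lemma idempotents_assoc [simp]: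
  "e0 * (e0 * c) = e0 * c" "einf * (einf * c) = einf * c" "e0 * (einf * c) = 0" "einf * (e0 * c) = 0"
  by (simp_all add: mult.assoc[symmetric])

lemma loops_in_corner [simp]:
  "e0 * x = x" "x * e0 = x" "e0 * y = y" "y * e0 = y" "e0 * xi = xi" "xi * e0 = xi"
  using path corner_absorb[of _ e0 e0] unfolding path_algebra_data_def by auto

lemma x_xi_inverse [simp]: "x * xi = e0" "xi * x = e0"
  using path by (simp_all add: path_algebra_data_def)

lemma loops_in_corner_assoc [simp]:
  "e0 * (x * c) = x * c" "x * (e0 * c) = x * c" "e0 * (y * c) = y * c" "y * (e0 * c) = y * c"
  "e0 * (xi * c) = xi * c" "xi * (e0 * c) = xi * c" "x * (xi * c) = e0 * c" "xi * (x * c) = e0 * c"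
  by (simp_all add: mult.assoc[symmetric])

lemma arrows_in_corner [simp]:
  assumes "a \<in> {1..d}"
  shows "e0 * w a = w a" "w a * einf = w a" "w a * e0 = 0" "einf * w a = 0"
    "einf * v a = v a" "v a * e0 = v a" "v a * einf = 0" "e0 * v a = 0"
proof -
  have w: "w a = e0 * w a * einf" and v: "v a = einf * v a * e0"
    using path assms by (simp_all add: path_algebra_data_def)
  show "e0 * w a = w a" "w a * einf = w a" "einf * v a = v a" "v a * e0 = v a"
    using corner_absorb[OF w] corner_absorb[OF v] by simp_all
  show "w a * e0 = 0" "einf * w a = 0" "v a * einf = 0" "e0 * v a = 0"
    using corner_annihilate[OF w] corner_annihilate[OF v] by simp_all
qed

lemma arrows_in_corner_assoc [simp]:
  assumes "a \<in> {1..d}"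
  shows "e0 * (w a * c) = w a * c" "w a * (einf * c) = w a * c" "w a * (e0 * c) = 0"
    "einf * (w a * c) = 0" "einf * (v a * c) = v a * c" "v a * (e0 * c) = v a * c"
    "v a * (einf * c) = 0" "e0 * (v a * c) = 0"
  using assms by (simp_all add: mult.assoc[symmetric])

definition z :: 'a where "z = y + xi"

definition t :: "nat \<Rightarrow> 'a" where "t a = e0 + w a * v a"

definition s :: "nat \<Rightarrow> 'a" where "s n = s_elem w v z n"

text \<open>Scaling both sides by 2 clears the halves, which the simplifier would not recombine.\<close>

lemma br_t_t:
  assumes "a \<in> {1..d}"
  shows "br (t a) (t a) = bracket_form tens e0 (1/2) (-1/2) 0 0 (t a) (t a)"
  unfolding t_def
  by (rule scaleR_left_imp_eq[of 2]) (use assms in \<open>simp_all add: br_mult_right br_mult_left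
      br_antisym[of "w a" "v a"] br_v_v br_w_w br_v_w osgn_def bracket_form_def algebra_simps scaleR_2\<close>)

lemma br_t_t_less:
  assumes "a \<in> {1..d}" and "b \<in> {1..d}" and "b < a"
  shows "br (t a) (t b) = bracket_form tens e0 (-1/2) (-1/2) (1/2) (1/2) (t a) (t b)"
  unfolding t_def
  by (rule scaleR_left_imp_eq[of 2]) (use assms in \<open>simp_all add: br_mult_right br_mult_left
      br_antisym[of "w a" "v b"] br_antisym[of "w b" "v a"]
      br_v_v br_w_w br_v_w osgn_def bracket_form_def algebra_simps scaleR_2\<close>)

lemma br_wv_loop:
  assumes "u \<in> {x, y}" and "a \<in> {1..d}"
  shows "br (w a * v a) u = bracket_form tens e0 (-1/2) (-1/2) (1/2) (1/2) (w a * v a) u"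
proof -
  have "br u (w a) = bracket_form tens e0 (1/2) 0 (-1/2) 0 u (w a)"
    and "br u (v a) = bracket_form tens e0 0 (1/2) 0 (-1/2) u (v a)"
    using assms by (simp_all add: br_loop_w br_loop_v bracket_form_def algebra_simps)
  then have "br (w a) u = bracket_form tens e0 0 (-1/2) (1/2) 0 (w a) u"
    and "br (v a) u = bracket_form tens e0 (-1/2) 0 0 (1/2) (v a) u"
    by (simp_all add: bracket_form_swap)
  from bracket_form_mult_left_expand[OF this] show ?thesis
    using assms by (simp add: bracket_form_def algebra_simps)
qed

lemma t_in_corner: "a \<in> {1..d} \<Longrightarrow> e0 * t a = t a" "a \<in> {1..d} \<Longrightarrow> t a * e0 = t a"
  by (simp_all add: t_def distrib_left distrib_right mult.assoc)

lemma br_t_loop: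
  assumes "u \<in> {x, y}" and "a \<in> {1..d}"
  shows "br (t a) u = bracket_form tens e0 (-1/2) (-1/2) (1/2) (1/2) (t a) u"
proof -
  have "e0 * u = u" and "u * e0 = u"
    using assms(1) by auto
  with br_wv_loop[OF assms] show ?thesis
    by (simp add: t_def bracket_form_def algebra_simps)
qed

lemma br_t_z:
  assumes "a \<in> {1..d}"
  shows "br (t a) z = bracket_form tens e0 (-1/2) (-1/2) (1/2) (1/2) (t a) z"
proof -
  have "br (t a) xi = bracket_form tens e0 (-1/2) (-1/2) (1/2) (1/2) (t a) xi"
    using bracket_form_inverse_right[OF br_t_loop[of x a]] assms by (simp add: t_in_corner)
  with br_t_loop[OF _ assms, of y] show ?thesis
    by (simp add: z_def bracket_form_add_right)
qed

lemma br_z_z: "br z z = bracket_form tens e0 (1/2) (-1/2) 0 0 z z"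
proof -
  have "br x x = bracket_form tens e0 (-1/2) (1/2) 0 0 x x"
    by (simp add: br_x_x bracket_form_def algebra_simps)
  then have "br x xi = bracket_form tens e0 0 0 (-1/2) (1/2) x xi"
    by (simp add: bracket_form_inverse_right)
  then have "br xi x = bracket_form tens e0 0 0 (1/2) (-1/2) xi x"
    by (simp add: bracket_form_swap)
  then have xi_xi: "br xi xi = bracket_form tens e0 (1/2) (-1/2) 0 0 xi xi"
    by (simp add: bracket_form_inverse_right)
  have y_x: "br y x = - tens e0 e0 + bracket_form tens e0 (-1/2) (-1/2) (1/2) (-1/2) y x"
    by (simp add: br_antisym[of y x] br_x_y bracket_form_def algebra_simps)
  have "br y xi = - lm xi (rm (br y x) xi)"
    by (rule br_inverse_right[where e = e0]) simp_all
  also have "\<dots> = tens xi xi + bracket_form tens e0 (1/2) (-1/2) (1/2) (1/2) y xi"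
    by (simp add: y_x bracket_form_def algebra_simps)
  finally have y_xi: "br y xi = tens xi xi + bracket_form tens e0 (1/2) (-1/2) (1/2) (1/2) y xi" .
  have xi_y: "br xi y = - tens xi xi + bracket_form tens e0 (1/2) (-1/2) (-1/2) (-1/2) xi y"
    by (simp add: br_antisym[of xi y] y_xi bracket_form_def algebra_simps)
  show ?thesis
    by (simp add: z_def br_y_y xi_xi y_xi xi_y bracket_form_def algebra_simps)
qed

lemma s_in_corner: "n \<le> d \<Longrightarrow> e0 * s n = s n \<and> s n * e0 = s n"
proof (induction n)
  case 0
  then show ?case by (simp add: s_def z_def distrib_left distrib_right)
next
  case (Suc n)
  then have IH: "e0 * s n = s n" "s n * e0 = s n" and a: "Suc n \<in> {1..d}"
    by auto
  have "s (Suc n) = s n + w (Suc n) * (v (Suc n) * s n)"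
    by (simp add: s_def distrib_right mult.assoc)
  then show ?case
    using IH a by (simp add: distrib_left distrib_right mult.assoc)
qed

text \<open>The factor \<open>1 + w v\<close> of \<open>s_elem\<close> may be replaced by its corner part \<open>t = e\<^sub>0 + w v\<close>,
  to which the normal-form calculus applies.\<close>

lemma s_Suc: "Suc n \<le> d \<Longrightarrow> s (Suc n) = t (Suc n) * s n"
  using s_in_corner[of n] by (simp add: s_def t_def distrib_right)

lemma br_t_s: "n < g \<Longrightarrow> g \<le> d \<Longrightarrow>
    br (t g) (s n) = bracket_form tens e0 (-1/2) (-1/2) (1/2) (1/2) (t g) (s n)"
proof (induction n)
  case 0
  then show ?case using br_t_z[of g] by (simp add: s_def)
next
  case (Suc n)
  have "br (t g) (t (Suc n)) = bracket_form tens e0 (-1/2) (-1/2) (1/2) (1/2) (t g) (t (Suc n))"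
    using Suc.prems by (simp add: br_t_t_less)
  from bracket_form_mult_right[OF this Suc.IH] show ?case
    using Suc.prems s_in_corner[of n] by (simp add: s_Suc t_in_corner)
qed

lemma br_s_s: "n \<le> d \<Longrightarrow> br (s n) (s n) = bracket_form tens e0 (1/2) (-1/2) 0 0 (s n) (s n)"
proof (induction n)
  case 0
  then show ?case using br_z_z by (simp add: s_def)
next
  case (Suc n)
  let ?a = "t (Suc n)" and ?b = "s n"
  have corner: "e0 * ?b = ?b" "?a * e0 = ?a"
    using Suc.prems s_in_corner[of n] t_in_corner[of "Suc n"] by auto
  have aa: "br ?a ?a = bracket_form tens e0 (1/2) (-1/2) 0 0 ?a ?a"
    using Suc.prems by (simp add: br_t_t)
  have bb: "br ?b ?b = bracket_form tens e0 (1/2) (-1/2) 0 0 ?b ?b"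
    using Suc by simp
  have ab: "br ?a ?b = bracket_form tens e0 (-1/2) (-1/2) (1/2) (1/2) ?a ?b"
    using Suc.prems by (simp add: br_t_s)
  then have ba: "br ?b ?a = bracket_form tens e0 (1/2) (1/2) (-1/2) (-1/2) ?b ?a"
    by (simp add: bracket_form_swap)
  have aba: "br (?a * ?b) ?a = bracket_form tens e0 (1/2) (-1/2) (1/2) (-1/2) (?a * ?b) ?a"
    using bracket_form_mult_left[OF aa ba corner] by (simp add: bracket_form_def algebra_simps)
  have abb: "br (?a * ?b) ?b = bracket_form tens e0 (1/2) (-1/2) (1/2) (-1/2) (?a * ?b) ?b"
    using bracket_form_mult_left[OF ab bb corner] by (simp add: bracket_form_def algebra_simps)
  have "br (?a * ?b) (?a * ?b) = bracket_form tens e0 (1/2) (-1/2) 0 0 (?a * ?b) (?a * ?b)"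
    using bracket_form_mult_right[OF aba abb corner] by (simp add: bracket_form_def)
  then show ?case
    using Suc.prems by (simp add: s_Suc)
qed

lemma br_s_s_less: "b < n \<Longrightarrow> n \<le> d \<Longrightarrow>
    br (s n) (s b) = bracket_form tens e0 (1/2) (-1/2) (1/2) (-1/2) (s n) (s b)"
proof (induction n)
  case 0
  then show ?case by simp
next
  case (Suc n)
  let ?a = "t (Suc n)" and ?b = "s n" and ?c = "s b"
  have corner: "e0 * ?b = ?b" "?a * e0 = ?a"
    using Suc.prems s_in_corner[of n] t_in_corner[of "Suc n"] by auto
  have ac: "br ?a ?c = bracket_form tens e0 (-1/2) (-1/2) (1/2) (1/2) ?a ?c"
    using Suc.prems by (simp add: br_t_s)
  have "br (?a * ?b) ?c = bracket_form tens e0 (1/2) (-1/2) (1/2) (-1/2) (?a * ?b) ?c"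
  proof (cases "b < n")
    case True
    then have "br ?b ?c = bracket_form tens e0 (1/2) (-1/2) (1/2) (-1/2) ?b ?c"
      using Suc by simp
    from bracket_form_mult_left[OF ac this corner] show ?thesis
      by simp
  next
    case False
    then have "b = n"
      using Suc.prems by simp
    then have "br ?b ?c = bracket_form tens e0 (1/2) (-1/2) 0 0 ?b ?c"
      using Suc.prems by (simp add: br_s_s)
    from bracket_form_mult_left[OF ac this corner] \<open>b = n\<close> show ?thesis
      by (simp add: bracket_form_def)
  qed
  then show ?case
    using Suc.prems by (simp add: s_Suc)
qed

lemma br_s_s_osgn:
  assumes "\<alpha> \<le> d" and "\<beta> \<le> d"
  shows "br (s \<alpha>) (s \<beta>) = (1/2) *\<^sub>R (tens e0 (s \<alpha> * s \<beta>) - tens (s \<beta> * s \<alpha>) e0)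
    + ((1/2) * osgn \<alpha> \<beta>) *\<^sub>R (tens (s \<beta>) (s \<alpha>) - tens (s \<alpha>) (s \<beta>))"
proof (cases \<alpha> \<beta> rule: linorder_cases)
  case less
  then have "br (s \<beta>) (s \<alpha>) = bracket_form tens e0 (1/2) (-1/2) (1/2) (-1/2) (s \<beta>) (s \<alpha>)"
    using assms by (simp add: br_s_s_less)
  from bracket_form_swap[OF this] less show ?thesis
    by (simp add: bracket_form_def osgn_def algebra_simps)
next
  case equal
  with br_s_s[OF assms(1)] show ?thesis
    by (simp add: bracket_form_def osgn_def algebra_simps)
next
  case greater
  with br_s_s_less[OF _ assms(1)] show ?thesis
    by (simp add: bracket_form_def osgn_def algebra_simps)
qed

end

theorem mainTheorem6:
  fixes d :: nat
    and e0 einf x y xi :: "'a::real_algebra_1"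
    and v w :: "nat \<Rightarrow> 'a"
    and tens :: "'a \<Rightarrow> 'a \<Rightarrow> 't::real_vector"
    and lm :: "'a \<Rightarrow> 't \<Rightarrow> 't" and rm :: "'t \<Rightarrow> 'a \<Rightarrow> 't" and sw :: "'t \<Rightarrow> 't"
    and br :: "'a \<Rightarrow> 'a \<Rightarrow> 't"
  assumes "d \<ge> 1"
    and "tensor_square tens lm rm sw"
    and "path_algebra_data d e0 einf x y xi v w"
    and "double_bracket d e0 einf x y v w tens lm rm sw br"
    and "\<alpha> \<le> d" and "\<beta> \<le> d"
  shows "br (s_elem w v (y + xi) \<alpha>) (s_elem w v (y + xi) \<beta>) =
           (1/2) *\<^sub>R (tens e0 (s_elem w v (y + xi) \<alpha> * s_elem w v (y + xi) \<beta>)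
                      - tens (s_elem w v (y + xi) \<beta> * s_elem w v (y + xi) \<alpha>) e0)
         + ((1/2) * osgn \<alpha> \<beta>) *\<^sub>R (tens (s_elem w v (y + xi) \<beta>) (s_elem w v (y + xi) \<alpha>)
                      - tens (s_elem w v (y + xi) \<alpha>) (s_elem w v (y + xi) \<beta>))"
proof -
  interpret framed_jordan_bracket d e0 einf x y xi v w tens lm rm sw br
    using assms(2-4) by unfold_locales
  show ?thesis
    using br_s_s_osgn[OF assms(5,6)] by (simp only: s_def z_def)
qed

end
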